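(* Let $\lambda>0$ with $\lambda\neq 1$ and $\mu=1/\lambda$, and let $A\in M_3\otimes M_3$ be the $9\times 9$ matrix (written as a $3\times 3$ block matrix with $3\times 3$ blocks) $$A=\left(\begin{array}{ccc|ccc|ccc} 1&0&0&0&1&0&0&0&1\\ 0&\lambda^2&0&1&0&0&0&0&0\\ 0&0&\mu^2&0&0&0&1&0&0\\ \hline 0&1&0&\mu^2&0&0&0&0&0\\ 1&0&0&0&1&0&0&0&1\\ 0&0&0&0&0&\lambda^2&0&1&0\\ \hline 0&0&1&0&0&0&\lambda^2&0&0\\ 0&0&0&0&0&1&0&\mu^2&0\\ 1&0&0&0&1&0&0&0&1 \end{array}\right).$$ Then $A\in\mathbb{T}\setminus\mathbb{V}_1$ (i.e. $A$ is, up to normalization, an entangled state with positive partial transpose), and $A$ generates an extreme ray of the cone $\mathbb{T}$: whenever $A=B+C$ with $B,C\in\mathbb{T}$, both $B$ and $C$ are nonnegative scalar multiples of $A$.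
   Context: Identify $M_3\otimes M_3$ with $3\times 3$ block matrices $A=\sum_{i,j=1}^3 a_{ij}\otimes e_{ij}$ with blocks $a_{ij}\in M_3$; the partial transpose is $A^\tau=\sum_{i,j}a_{ji}\otimes e_{ij}$. $\mathbb{T}$ is the cone of $A\in M_3\otimes M_3$ such that both $A$ and $A^\tau$ are positive semi-definite. For $z\in M_3$ with rows $z_1,z_2,z_3\in\mathbb C^3$ (as column vectors), $\tilde z\tilde z^*$ denotes the block matrix whose $(i,j)$ block is $z_iz_j^*$; $\mathbb{V}_1$ is the convex cone generated by $\{\tilde z\tilde z^*:\operatorname{rank} z\le 1\}$. *)

theory Defs
  imports "HOL-Analysis.Analysis"
begin

text \<open>M_3 is complex^3^3; M_3 (x) M_3 is complex^(3*3)^(3*3), the row/column index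
 (i,k) meaning block i, position k inside the block. So A $ (i,k) $ (j,l) is the
 (k,l) entry of the block a_ij.\<close>

type_synonym bmat = "complex^(3 \<times> 3)^(3 \<times> 3)"

definition hermitian_mat :: "complex^'n^'n \<Rightarrow> bool" where
  "hermitian_mat M \<longleftrightarrow> (\<forall>r c. M $ r $ c = cnj (M $ c $ r))"

definition psd :: "complex^'n^'n \<Rightarrow> bool" where
  "psd M \<longleftrightarrow> hermitian_mat M \<and>
     (\<forall>x :: complex^'n. 0 \<le> Re (\<Sum>r\<in>UNIV. \<Sum>c\<in>UNIV. cnj (x $ r) * M $ r $ c * x $ c))"

text \<open>Partial transpose: the (i,j) block of A^tau is a_ji.\<close>
definition ptrans :: "bmat \<Rightarrow> bmat" where
  "ptrans A = (\<chi> p q. A $ (fst q, snd p) $ (fst p, snd q))"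

definition coneT :: "bmat set" where
  "coneT = {A. psd A \<and> psd (ptrans A)}"

text \<open>z-tilde z-tilde^*: the (i,j) block is z_i z_j^*, z_i the i-th row of z.\<close>
definition ztilde_outer :: "complex^3^3 \<Rightarrow> bmat" where
  "ztilde_outer z = (\<chi> p q. z $ fst p $ snd p * cnj (z $ fst q $ snd q))"

definition coneV1 :: "bmat set" where
  "coneV1 = convex_cone hull {ztilde_outer z | z. rank z \<le> 1}"

definition idx3 :: "3 \<Rightarrow> nat" where
  "idx3 i = (if i = 0 then 0 else if i = 1 then 1 else 2)"

definition Aentries :: "real \<Rightarrow> real list list" where
  "Aentries lam = (let mu = 1 / lam; a = lam^2; b = mu^2 in
    [[1,0,0, 0,1,0, 0,0,1],
     [0,a,0, 1,0,0, 0,0,0],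
     [0,0,b, 0,0,0, 1,0,0],
     [0,1,0, b,0,0, 0,0,0],
     [1,0,0, 0,1,0, 0,0,1],
     [0,0,0, 0,0,a, 0,1,0],
     [0,0,1, 0,0,0, a,0,0],
     [0,0,0, 0,0,1, 0,b,0],
     [1,0,0, 0,1,0, 0,0,1]])"

definition Amat :: "real \<Rightarrow> bmat" where
  "Amat lam = (\<chi> p q. complex_of_real
     (Aentries lam ! (3 * idx3 (fst p) + idx3 (snd p)) ! (3 * idx3 (fst q) + idx3 (snd q))))"

end

(*
  A = \<Sum> w w\<^sup>* over w = e00 + e11 + e22 and the three vectors w = \<lambda> e_p + \<lambda>\<^sup>-\<^sup>1 e_q with
  (p, q) = ((0,1), (1,0)), ((2,0), (0,2)), ((1,2), (2,1)), and A is its own partial transpose,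
  so A \<in> T.
  If A = B + C with B, C \<in> T, then B and B\<^sup>\<tau> vanish on the kernel of A = A\<^sup>\<tau>, which is
  spanned by five explicit vectors. On B these conditions leave only the 4 x 4 block of entries
  indexed by (0,0), (1,0), (0,2), (2,1). On B\<^sup>\<tau> they give, for each off-diagonal entry w of
  that block, either w = \<lambda>\<^sup>6 cnj w, so w = 0 because \<lambda>\<^sup>6 \<noteq> 1, or w = \<lambda>\<^sup>4 w' for such an
  entry w'. They also make the diagonal of the block proportional to that of A. Hence B is a
  nonnegative multiple of A, i.e. A spans an extreme ray of T.
  The generators of V\<^sub>1 lie in T but off this ray, because a rank-one matrix cannot have the
  2 x 2 minor pattern of A at (0,0), (0,1). The elements of T off an extreme ray form a convex
  cone, so A \<notin> V\<^sub>1.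
*)

theory Submission
  imports Defs
begin

section \<open>Sesquilinear forms and positive semi-definite matrices\<close>

definition sesq :: "complex^'n^'n \<Rightarrow> complex^'n \<Rightarrow> complex^'n \<Rightarrow> complex" where
  "sesq M x y = (\<Sum>r\<in>UNIV. cnj (x $ r) * (M *v y) $ r)"

lemma psd_iff_sesq: "psd M \<longleftrightarrow> hermitian_mat M \<and> (\<forall>x. 0 \<le> Re (sesq M x x))"
  by (simp add: psd_def sesq_def matrix_vector_mult_def sum_distrib_left mult.assoc)

lemma sesq_add_left [simp]: "sesq M (x + y) z = sesq M x z + sesq M y z"
  by (simp add: sesq_def sum.distrib algebra_simps)

lemma sesq_add_right [simp]: "sesq M x (y + z) = sesq M x y + sesq M x z"
  by (simp add: sesq_def sum.distrib algebra_simps)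

lemma sesq_scale_left [simp]: "sesq M (c *s x) y = cnj c * sesq M x y"
  by (simp add: sesq_def sum_distrib_left mult.assoc)

lemma sesq_scale_right [simp]: "sesq M x (c *s y) = c * sesq M x y"
  by (simp add: sesq_def matrix_vector_mult_def sum_distrib_left algebra_simps)

lemma sesq_add_matrix: "sesq (M + N) x y = sesq M x y + sesq N x y"
  by (simp add: sesq_def matrix_vector_mult_add_rdistrib sum.distrib algebra_simps)

lemma sesq_axis_left: "sesq M (axis r 1) y = (M *v y) $ r"
proof -
  have "sesq M (axis r 1) y = (\<Sum>s\<in>UNIV. if s = r then (M *v y) $ s else 0)"
    unfolding sesq_def by (intro sum.cong) (auto simp: axis_def)
  then show ?thesis by simp
qed

lemma matrix_vector_mult_axis: "(M *v axis q 1) $ p = M $ p $ q"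
proof -
  have "(M *v axis q 1) $ p = (\<Sum>j\<in>UNIV. if j = q then M $ p $ j else 0)"
    unfolding matrix_vector_mult_def vec_lambda_beta by (intro sum.cong) (auto simp: axis_def)
  then show ?thesis by simp
qed

lemma hermitian_matD: "hermitian_mat M \<Longrightarrow> M $ p $ q = cnj (M $ q $ p)"
  unfolding hermitian_mat_def by blast

lemma hermitian_sesq_swap:
  assumes "hermitian_mat M" shows "sesq M x y = cnj (sesq M y x)"
proof -
  have "sesq M x y = (\<Sum>r\<in>UNIV. \<Sum>c\<in>UNIV. cnj (x $ r) * M $ r $ c * y $ c)"
    by (simp add: sesq_def matrix_vector_mult_def sum_distrib_left mult.assoc)
  also have "\<dots> = (\<Sum>r\<in>UNIV. \<Sum>c\<in>UNIV. cnj (x $ r) * cnj (M $ c $ r) * y $ c)"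
    using hermitian_matD[OF assms] by (intro sum.cong refl) metis
  also have "\<dots> = (\<Sum>c\<in>UNIV. \<Sum>r\<in>UNIV. cnj (x $ r) * cnj (M $ c $ r) * y $ c)"
    by (rule sum.swap)
  also have "\<dots> = cnj (sesq M y x)"
    by (simp add: sesq_def matrix_vector_mult_def sum_distrib_left ac_simps)
  finally show ?thesis .
qed

lemma nonneg_quadratic_imp_linear_coeff_zero:
  fixes b c :: real
  assumes "\<And>t. 0 \<le> b * t + c * t\<^sup>2"
  shows "b = 0"
proof (rule ccontr)
  assume "b \<noteq> 0"
  define k where "k = \<bar>c\<bar> + 1"
  have "k > 0" "c - k < 0" by (auto simp: k_def)
  have "b * (- b / k) + c * (- b / k)\<^sup>2 = b\<^sup>2 / k\<^sup>2 * (c - k)"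
    using \<open>k > 0\<close> by (simp add: field_simps power2_eq_square)
  also have "\<dots> < 0"
    using \<open>b \<noteq> 0\<close> \<open>k > 0\<close> \<open>c - k < 0\<close> by (intro mult_pos_neg) auto
  finally show False using assms[of "- b / k"] by linarith
qed

lemma psd_sesq_eq_0_imp_kernel:
  assumes "psd M" and "Re (sesq M v v) = 0"
  shows "M *v v = 0"
proof -
  have herm: "hermitian_mat M" and nonneg: "\<And>x. 0 \<le> Re (sesq M x x)"
    using assms(1) by (auto simp: psd_iff_sesq)
  have Re_0: "Re (sesq M w v) = 0" for w
  proof -
    have "2 * Re (sesq M w v) = 0"
    proof (rule nonneg_quadratic_imp_linear_coeff_zero)
      fix t :: real
      have "sesq M (v + of_real t *s w) (v + of_real t *s w)
          = sesq M v v + of_real t * (sesq M w v + cnj (sesq M w v)) + of_real (t\<^sup>2) * sesq M w w"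
        using hermitian_sesq_swap[OF herm, of v w] by (simp add: algebra_simps power2_eq_square)
      then show "0 \<le> 2 * Re (sesq M w v) * t + Re (sesq M w w) * t\<^sup>2"
        using nonneg[of "v + of_real t *s w"] assms(2) by (simp add: algebra_simps)
    qed
    then show ?thesis by simp
  qed
  have "sesq M w v = 0" for w
    using Re_0[of w] Re_0[of "\<i> *s w"] by (simp add: complex_eq_iff)
  then show ?thesis
    by (simp add: vec_eq_iff flip: sesq_axis_left)
qed

lemma psd_summand_kernel:
  assumes "psd B" "psd C" "B + C = M" "M *v v = 0"
  shows "B *v v = 0"
proof -
  have "sesq B v v + sesq C v v = sesq M v v"
    by (simp add: assms(3)[symmetric] sesq_add_matrix)
  also have "\<dots> = 0"
    by (simp add: sesq_def assms(4))
  finally have "sesq B v v + sesq C v v = 0" .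
  moreover have "0 \<le> Re (sesq B v v)" "0 \<le> Re (sesq C v v)"
    using assms(1,2) by (auto simp: psd_iff_sesq)
  ultimately have "Re (sesq B v v) = 0"
    by (metis add_nonneg_eq_0_iff plus_complex.sel(1) zero_complex.sel(1))
  with assms(1) show ?thesis by (rule psd_sesq_eq_0_imp_kernel)
qed

lemma psd_diagonal_nonneg:
  assumes "psd M"
  shows "M $ p $ p = of_real (Re (M $ p $ p))" "0 \<le> Re (M $ p $ p)"
proof -
  have "M $ p $ p = cnj (M $ p $ p)"
    using assms hermitian_matD unfolding psd_def by blast
  then show "M $ p $ p = of_real (Re (M $ p $ p))"
    by (metis Reals_cnj_iff complex_is_Real_iff of_real_Re)
  have "sesq M (axis p 1) (axis p 1) = M $ p $ p"
    by (simp only: sesq_axis_left matrix_vector_mult_axis)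
  then show "0 \<le> Re (M $ p $ p)"
    using assms by (metis psd_iff_sesq)
qed

lemma matrix_scaleR_entry: "(c *\<^sub>R M) $ p $ q = of_real c * M $ p $ q"
  by (simp only: vector_scaleR_component) (simp only: scaleR_conv_of_real)

lemma hermitian_mat_add:
  assumes "hermitian_mat M" "hermitian_mat N" shows "hermitian_mat (M + N)"
  unfolding hermitian_mat_def
proof (intro allI)
  fix r c
  show "(M + N) $ r $ c = cnj ((M + N) $ c $ r)"
    using hermitian_matD[OF assms(1), of r c] hermitian_matD[OF assms(2), of r c] by simp
qed

lemma hermitian_mat_scaleR:
  assumes "hermitian_mat M" shows "hermitian_mat (c *\<^sub>R M)"
  unfolding hermitian_mat_def
proof (intro allI)
  fix r k
  show "(c *\<^sub>R M) $ r $ k = cnj ((c *\<^sub>R M) $ k $ r)"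
    using hermitian_matD[OF assms, of r k] by (simp add: matrix_scaleR_entry)
qed

lemma psd_add: "psd M \<Longrightarrow> psd N \<Longrightarrow> psd (M + N)"
  by (simp add: psd_iff_sesq sesq_add_matrix hermitian_mat_add)

lemma psd_scaleR:
  assumes "0 \<le> c" "psd M" shows "psd (c *\<^sub>R M)"
proof -
  have "(c *\<^sub>R M) *v x = of_real c *s (M *v x)" for x
    by (simp add: vec_eq_iff matrix_vector_mult_def matrix_scaleR_entry sum_distrib_left mult.assoc
        del: vector_scaleR_component)
  then have "sesq (c *\<^sub>R M) x x = of_real c * sesq M x x" for x
    by (simp add: sesq_def sum_distrib_left mult.left_commute)
  with assms show ?thesis
    by (simp add: psd_iff_sesq hermitian_mat_scaleR)
qed

lemma psd_0: "psd 0"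
  by (simp add: psd_def hermitian_mat_def)

definition outer :: "complex^'n \<Rightarrow> complex^'n^'n" where
  "outer w = (\<chi> r c. w $ r * cnj (w $ c))"

lemma psd_outer: "psd (outer w)"
proof -
  have "sesq (outer w) x x = s * cnj s" if "s = (\<Sum>r\<in>UNIV. cnj (x $ r) * w $ r)" for x s
  proof -
    have "s * cnj s = (\<Sum>r\<in>UNIV. \<Sum>c\<in>UNIV. (cnj (x $ r) * w $ r) * (x $ c * cnj (w $ c)))"
      unfolding that by (simp add: sum_product)
    also have "\<dots> = sesq (outer w) x x"
      by (simp add: sesq_def outer_def matrix_vector_mult_def sum_distrib_left ac_simps)
    finally show ?thesis ..
  qed
  then have "0 \<le> Re (sesq (outer w) x x)" for x
    by (simp only: complex_mult_cnj Re_complex_of_real) simp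
  then show ?thesis
    by (simp add: psd_iff_sesq hermitian_mat_def outer_def)
qed

lemma outer_mult_vec: "outer w *v v = (\<Sum>c\<in>UNIV. cnj (w $ c) * v $ c) *s w"
proof -
  have "(outer w *v v) $ i = w $ i * (\<Sum>c\<in>UNIV. cnj (w $ c) * v $ c)" for i
    by (simp add: outer_def matrix_vector_mult_def sum_distrib_left mult.assoc)
  then show ?thesis
    by (simp add: vec_eq_iff mult.commute)
qed

lemma outer_entry_mult: "outer w $ p $ q * outer w $ q $ p = outer w $ p $ p * outer w $ q $ q"
  by (simp add: outer_def mult.commute mult.left_commute)

section \<open>The PPT cone and its rank-one generators\<close>

lemma linear_ptrans: "linear ptrans"
  by (rule linearI) (simp_all add: ptrans_def vec_eq_iff)

lemma ptrans_entry: "ptrans M $ p $ q = M $ (fst q, snd p) $ (fst p, snd q)"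
  by (simp add: ptrans_def)

lemma convex_cone_coneT: "convex_cone coneT"
  unfolding convex_cone_iff coneT_def
  by (simp add: psd_0 psd_add psd_scaleR linear_0[OF linear_ptrans]
      linear_add[OF linear_ptrans] linear_scale[OF linear_ptrans])

text \<open>The elements of \<open>K\<close> off the extreme ray through \<open>x\<close> form a convex cone.\<close>

lemma extreme_ray_notin_convex_cone_hull:
  fixes x :: "'a::real_vector"
  assumes K: "convex_cone K" and "S \<subseteq> K" and "x \<noteq> 0"
    and extreme: "\<And>y z. y \<in> K \<Longrightarrow> z \<in> K \<Longrightarrow> y + z = x \<Longrightarrow> \<exists>b\<ge>0. y = b *\<^sub>R x"
    and off_ray: "\<And>s. 0 < s \<Longrightarrow> s *\<^sub>R x \<notin> S"
  shows "x \<notin> convex_cone hull S"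
proof -
  define D where "D = {y \<in> K. \<forall>s>0. y \<noteq> s *\<^sub>R x}"
  have "convex_cone D"
    unfolding convex_cone_iff
  proof (intro conjI ballI allI impI)
    show "0 \<in> D"
      using K \<open>x \<noteq> 0\<close> by (auto simp: D_def convex_cone_contains_0)
  next
    fix y z assume y: "y \<in> D" and z: "z \<in> D"
    have "y + z \<noteq> s *\<^sub>R x" if "s > 0" for s
    proof
      assume sum: "y + z = s *\<^sub>R x"
      have "(1 / s) *\<^sub>R y \<in> K" "(1 / s) *\<^sub>R z \<in> K"
        using y z K \<open>s > 0\<close> by (auto simp: D_def convex_cone_scaleR)
      moreover have "(1 / s) *\<^sub>R y + (1 / s) *\<^sub>R z = x"
        using sum \<open>s > 0\<close> by (simp flip: scaleR_add_right)
      ultimately obtain b where "b \<ge> 0" and b: "(1 / s) *\<^sub>R y = b *\<^sub>R x"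
        using extreme by blast
      have "y = s *\<^sub>R ((1 / s) *\<^sub>R y)"
        using \<open>s > 0\<close> by simp
      also have "\<dots> = (s * b) *\<^sub>R x"
        using b by simp
      finally have "y = (s * b) *\<^sub>R x" .
      moreover from y this have "\<not> 0 < s * b"
        by (auto simp: D_def)
      ultimately have "y = 0"
        using \<open>s > 0\<close> \<open>b \<ge> 0\<close> by (auto simp: zero_less_mult_iff)
      with z sum \<open>s > 0\<close> show False
        by (auto simp: D_def)
    qed
    with y z K show "y + z \<in> D"
      by (auto simp: D_def convex_cone_add)
  next
    fix y and c :: real assume y: "y \<in> D" and "c \<ge> 0"
    have "c *\<^sub>R y \<noteq> s *\<^sub>R x" if "s > 0" for s
    proof
      assume eq: "c *\<^sub>R y = s *\<^sub>R x"
      show False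
      proof (cases "c = 0")
        case True
        with eq \<open>s > 0\<close> \<open>x \<noteq> 0\<close> show False by simp
      next
        case False
        then have "y = (s / c) *\<^sub>R x"
          using arg_cong[OF eq, of "scaleR (1 / c)"] by simp
        moreover have "s / c > 0"
          using \<open>s > 0\<close> \<open>c \<ge> 0\<close> False by simp
        ultimately show False
          using y by (auto simp: D_def)
      qed
    qed
    with y K \<open>c \<ge> 0\<close> show "c *\<^sub>R y \<in> D"
      by (auto simp: D_def convex_cone_scaleR)
  qed
  then have "convex_cone hull S \<subseteq> D"
    using assms(2) off_ray by (intro hull_minimal) (auto simp: D_def)
  moreover have "x \<notin> D"
    by (auto simp: D_def intro: exI[of _ 1])
  ultimately show ?thesis by blast
qed

lemma rank_le_1_imp_factor:
  fixes z :: "'a::field^'n^'m"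
  assumes "rank z \<le> 1"
  obtains u v where "\<And>i k. z $ i $ k = u $ i * v $ k"
proof -
  obtain B where B: "B \<subseteq> rows z" "vec.independent B" "rows z \<subseteq> vec.span B"
      "card B = vec.dim (rows z)"
    by (rule vec.basis_exists)
  have "finite B"
    using B(2) by (rule vec.finiteI_independent)
  moreover have "card B \<le> 1"
    using B(4) assms by (simp add: row_rank_def_gen)
  ultimately have "\<forall>a\<in>B. \<forall>b\<in>B. a = b"
    using card_le_Suc0_iff_eq by auto
  then obtain w where "B \<subseteq> {w}"
    by blast
  then have "rows z \<subseteq> vec.span {w}"
    using B(3) vec.span_mono by blast
  then have "\<forall>i. \<exists>c. row i z = c *s w"
    by (auto simp: rows_def vec.span_singleton)
  then obtain c where c: "\<And>i. row i z = c i *s w"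
    by metis
  have "z $ i $ k = (\<chi> i. c i) $ i * w $ k" for i k
    using arg_cong[OF c[of i], of "\<lambda>r. r $ k"] by (simp add: row_def)
  then show ?thesis by (rule that)
qed

lemma ztilde_outer_eq_outer: "ztilde_outer z = outer (\<chi> p. z $ fst p $ snd p)"
  by (simp add: ztilde_outer_def outer_def)

lemma ztilde_outer_in_coneT:
  assumes "rank z \<le> 1"
  shows "ztilde_outer z \<in> coneT"
proof -
  obtain u v where uv: "\<And>i k. z $ i $ k = u $ i * v $ k"
    using rank_le_1_imp_factor[OF assms] by blast
  have "ptrans (ztilde_outer z) = outer (\<chi> p. cnj (u $ fst p) * v $ snd p)"
    by (simp add: vec_eq_iff ptrans_entry ztilde_outer_def outer_def uv ac_simps)
  then show ?thesis
    by (simp add: coneT_def ztilde_outer_eq_outer psd_outer)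
qed

section \<open>The matrix A\<close>

lemma UNIV_3': "(UNIV :: 3 set) = {0, 1, 2}"
proof -
  have "x \<in> {0, 1, 2}" for x :: 3
    using exhaust_3[of x] by auto
  then show ?thesis by auto
qed

lemma forall_3': "(\<forall>i::3. P i) \<longleftrightarrow> P 0 \<and> P 1 \<and> P 2"
proof -
  have "(\<forall>i::3. P i) \<longleftrightarrow> (\<forall>i\<in>{0, 1, 2}. P i)"
    by (simp only: UNIV_3'[symmetric] ball_UNIV)
  then show ?thesis by simp
qed

lemma sum_UNIV_3x3:
  "sum f (UNIV :: (3 \<times> 3) set) = f (0,0) + f (0,1) + f (0,2) + f (1,0) + f (1,1) + f (1,2)
     + f (2,0) + f (2,1) + f (2,2)"
proof -
  have "sum f (UNIV :: (3 \<times> 3) set) = (\<Sum>i\<in>UNIV. \<Sum>k\<in>UNIV. f (i,k))"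
    by (simp add: sum.cartesian_product flip: UNIV_Times_UNIV)
  then show ?thesis
    unfolding UNIV_3' by (simp add: add.assoc)
qed

lemma Amat_entry: "Amat lam $ (i,k) $ (j,l) =
    complex_of_real (Aentries lam ! (3 * idx3 i + idx3 k) ! (3 * idx3 j + idx3 l))"
  by (simp add: Amat_def)

lemma idx3_simps [simp]: "idx3 0 = 0" "idx3 1 = 1" "idx3 2 = 2"
  by (simp_all add: idx3_def)

lemma ptrans_Amat: "ptrans (Amat lam) = Amat lam"
  unfolding vec_eq_iff ptrans_def split_paired_All forall_3' vec_lambda_beta fst_conv snd_conv
  by (intro conjI; simp add: Amat_entry Aentries_def Let_def)

definition pair_vec :: "complex \<Rightarrow> complex \<Rightarrow> 3 \<times> 3 \<Rightarrow> 3 \<times> 3 \<Rightarrow> complex^(3\<times>3)" where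
  "pair_vec x y p q = (\<chi> r. if r = p then x else if r = q then y else 0)"

definition diag_vec :: "complex^(3\<times>3)" where
  "diag_vec = (\<chi> p. if fst p = snd p then 1 else 0)"

lemma Amat_decomposition:
  assumes "lam \<noteq> 0"
  defines "u p q \<equiv> pair_vec (of_real lam) (of_real (1 / lam)) p q"
  shows "Amat lam = outer diag_vec + outer (u (0,1) (1,0)) + outer (u (2,0) (0,2)) + outer (u (1,2) (2,1))"
  unfolding vec_eq_iff split_paired_All forall_3'
  by (intro conjI; simp add: Amat_entry Aentries_def Let_def outer_def pair_vec_def diag_vec_def
      u_def assms power2_eq_square)

lemma Amat_in_coneT:
  assumes "lam \<noteq> 0" shows "Amat lam \<in> coneT"
proof -
  have "psd (Amat lam)"
    by (simp add: Amat_decomposition[OF assms] psd_add psd_outer)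
  then show ?thesis
    by (simp add: coneT_def ptrans_Amat)
qed

definition Amat_null_vectors :: "real \<Rightarrow> (complex^(3\<times>3)) set" where
  "Amat_null_vectors lam = (let a = complex_of_real (lam\<^sup>2) in
     {pair_vec 1 (-1) (1,1) (0,0), pair_vec 1 (-1) (2,2) (0,0),
      pair_vec 1 (-a) (0,1) (1,0), pair_vec 1 (-a) (2,0) (0,2), pair_vec 1 (-a) (1,2) (2,1)})"

lemma Amat_mult_null_vector:
  assumes "lam \<noteq> 0" and "v \<in> Amat_null_vectors lam"
  shows "Amat lam *v v = 0"
proof -
  define u where "u p q = pair_vec (of_real lam) (of_real (1 / lam)) p q" for p q
  have "(\<Sum>c\<in>UNIV. cnj (w $ c) * v $ c) = 0"
    if "w \<in> {diag_vec, u (0,1) (1,0), u (2,0) (0,2), u (1,2) (2,1)}" for w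
    using that assms
    by (auto simp: Amat_null_vectors_def Let_def u_def sum_UNIV_3x3 pair_vec_def diag_vec_def
        power2_eq_square)
  then show ?thesis
    by (simp add: Amat_decomposition[OF assms(1)] u_def matrix_vector_mult_add_rdistrib outer_mult_vec)
qed

lemma matrix_vector_mult_pair_vec_eq_0D:
  assumes "p \<noteq> q" and "M *v pair_vec 1 (- c) p q = 0"
  shows "M $ r $ p = c * M $ r $ q"
proof -
  have "(M *v pair_vec 1 (- c) p q) $ r
      = (\<Sum>s\<in>UNIV. (if s = p then M $ r $ p else 0) + (if s = q then - c * M $ r $ q else 0))"
    unfolding matrix_vector_mult_def pair_vec_def using assms(1) by (auto intro: sum.cong)
  also have "\<dots> = M $ r $ p - c * M $ r $ q"
    by (simp add: sum.distrib)
  finally show ?thesis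
    using assms(2) by simp
qed

lemma Amat_null_vectors_column_relations:
  assumes "\<forall>v\<in>Amat_null_vectors lam. M *v v = 0"
  shows "M $ r $ (1,1) = M $ r $ (0,0)" "M $ r $ (2,2) = M $ r $ (0,0)"
    "M $ r $ (0,1) = of_real (lam\<^sup>2) * M $ r $ (1,0)"
    "M $ r $ (2,0) = of_real (lam\<^sup>2) * M $ r $ (0,2)"
    "M $ r $ (1,2) = of_real (lam\<^sup>2) * M $ r $ (2,1)"
  using assms matrix_vector_mult_pair_vec_eq_0D[of _ _ M 1 r]
    matrix_vector_mult_pair_vec_eq_0D[of _ _ M "of_real (lam\<^sup>2)" r]
  by (simp_all add: Amat_null_vectors_def Let_def)

lemma Amat_null_vectors_row_relations:
  assumes "hermitian_mat M" and "\<forall>v\<in>Amat_null_vectors lam. M *v v = 0"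
  shows "M $ (1,1) $ r = M $ (0,0) $ r" "M $ (2,2) $ r = M $ (0,0) $ r"
    "M $ (0,1) $ r = of_real (lam\<^sup>2) * M $ (1,0) $ r"
    "M $ (2,0) $ r = of_real (lam\<^sup>2) * M $ (0,2) $ r"
    "M $ (1,2) $ r = of_real (lam\<^sup>2) * M $ (2,1) $ r"
  using Amat_null_vectors_column_relations[OF assms(2), of r]
  by (simp_all only: hermitian_matD[OF assms(1), of _ r] complex_cnj_mult complex_cnj_complex_of_real)

section \<open>A spans an extreme ray of the PPT cone\<close>

lemma eq_mult_cnj_imp_0:
  fixes w c :: complex
  assumes "w = c * cnj w" and "cmod c \<noteq> 1"
  shows "w = 0"
proof -
  from assms(1) have "cmod w = cmod (c * cnj w)"
    by (rule arg_cong)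
  also have "\<dots> = cmod c * cmod w"
    by (simp add: norm_mult)
  finally have "cmod w = 0 \<or> cmod c = 1"
    by (simp only: mult_cancel_right1)
  with assms(2) show ?thesis
    by simp
qed

lemma null_vectors_force_multiple_of_Amat:
  assumes lam: "0 < lam" "lam \<noteq> 1" and herm: "hermitian_mat B"
    and null: "\<forall>v\<in>Amat_null_vectors lam. B *v v = 0"
    and null_pt: "\<forall>v\<in>Amat_null_vectors lam. ptrans B *v v = 0"
  shows "B $ p $ q = B $ (0,0) $ (0,0) * Amat lam $ p $ q"
proof -
  define a where "a = complex_of_real (lam\<^sup>2)"
  have "a \<noteq> 0" using lam by (simp add: a_def)
  have "lam ^ 6 \<noteq> 1"
    using lam power_eq_imp_eq_base[of lam 6 1] by auto
  then have cube: "cmod (a ^ 3) \<noteq> 1"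
    by (simp add: a_def norm_power flip: power_mult)
  have cnj_B: "cnj (B $ p $ q) = B $ q $ p" for p q
    using hermitian_matD[OF herm, of q p] by simp
  note R = Amat_null_vectors_column_relations[OF null, folded a_def]
    Amat_null_vectors_row_relations[OF herm null, folded a_def]
  note T = Amat_null_vectors_column_relations[OF null_pt, folded a_def, unfolded ptrans_entry]
  have self_conj_zero: "B $ p $ q = 0" if "B $ p $ q = a ^ 3 * B $ q $ p" for p q
    using eq_mult_cnj_imp_0[OF _ cube, of "B $ p $ q"] that cnj_B[of p q] by metis
  have z1: "B $ (0,2) $ (2,1) = 0"
    using T(3)[of "(2,2)"] by (intro self_conj_zero) (simp add: R power3_eq_cube mult.assoc)
  have z2: "B $ (2,1) $ (1,0) = 0"
    using T(4)[of "(1,1)"] by (intro self_conj_zero) (simp add: R power3_eq_cube mult.assoc)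
  have z3: "B $ (1,0) $ (0,2) = 0"
    using T(5)[of "(0,0)"] by (intro self_conj_zero) (simp add: R power3_eq_cube mult.assoc)
  have z4: "B $ (0,0) $ (1,0) = 0"
    using T(2)[of "(1,0)"] by (simp add: R z1)
  have z5: "B $ (0,0) $ (0,2) = 0"
    using T(5)[of "(0,1)"] by (simp add: R z2)
  have z6: "B $ (0,0) $ (2,1) = 0"
    using T(1)[of "(2,1)"] by (simp add: R z3)
  have flip: "B $ q $ p = 0" if "B $ p $ q = 0" for p q
    using cnj_B[of p q] that by simp
  note Z = z1 z2 z3 z4 z5 z6 flip[OF z1] flip[OF z2] flip[OF z3] flip[OF z4] flip[OF z5] flip[OF z6]
  have "B $ (0,0) $ (0,0) = a * B $ (1,0) $ (1,0)"
      "B $ (0,0) $ (0,0) = a * B $ (0,2) $ (0,2)"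
      "B $ (0,0) $ (0,0) = a * B $ (2,1) $ (2,1)"
    using T(3)[of "(1,0)"] T(4)[of "(0,2)"] T(5)[of "(2,1)"] by (simp_all add: R)
  then have D: "B $ (1,0) $ (1,0) = B $ (0,0) $ (0,0) / a"
      "B $ (0,2) $ (0,2) = B $ (0,0) $ (0,0) / a"
      "B $ (2,1) $ (2,1) = B $ (0,0) $ (0,0) / a"
    using \<open>a \<noteq> 0\<close> by (simp_all add: field_simps)
  have la: "(complex_of_real lam)\<^sup>2 = a"
    by (simp add: a_def)
  have "\<forall>i k j l. B $ (i,k) $ (j,l) = B $ (0,0) $ (0,0) * Amat lam $ (i,k) $ (j,l)"
    unfolding forall_3'
    by (intro conjI; simp add: R Z D la Amat_entry Aentries_def Let_def power_one_over \<open>a \<noteq> 0\<close>)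
  then show ?thesis
    by (metis prod.collapse)
qed

lemma coneT_summand_of_Amat_on_ray:
  assumes lam: "0 < lam" "lam \<noteq> 1"
    and "B \<in> coneT" "C \<in> coneT" "B + C = Amat lam"
  shows "\<exists>b\<ge>0. B = b *\<^sub>R Amat lam"
proof -
  have psd: "psd B" "psd C" "psd (ptrans B)" "psd (ptrans C)"
    using assms(3,4) by (auto simp: coneT_def)
  have "ptrans B + ptrans C = ptrans (B + C)"
    by (rule linear_add[OF linear_ptrans, symmetric])
  also have "\<dots> = Amat lam"
    by (simp add: assms(5) ptrans_Amat)
  finally have sum_pt: "ptrans B + ptrans C = Amat lam" .
  have A_null: "Amat lam *v v = 0" if "v \<in> Amat_null_vectors lam" for v
    using lam that by (simp add: Amat_mult_null_vector)
  have B_eq: "B $ p $ q = B $ (0,0) $ (0,0) * Amat lam $ p $ q" for p q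
  proof (rule null_vectors_force_multiple_of_Amat[OF lam])
    show "hermitian_mat B"
      using psd(1) by (simp add: psd_def)
    show "\<forall>v\<in>Amat_null_vectors lam. B *v v = 0"
      using psd_summand_kernel[OF psd(1,2) assms(5)] A_null by blast
    show "\<forall>v\<in>Amat_null_vectors lam. ptrans B *v v = 0"
      using psd_summand_kernel[OF psd(3,4) sum_pt] A_null by blast
  qed
  define b where "b = Re (B $ (0,0) $ (0,0))"
  have b: "B $ (0,0) $ (0,0) = of_real b" "b \<ge> 0"
    unfolding b_def by (rule psd_diagonal_nonneg[OF psd(1)])+
  have "B = b *\<^sub>R Amat lam"
    unfolding vec_eq_iff matrix_scaleR_entry b(1)[symmetric] using B_eq by blast
  with b(2) show ?thesis by blast
qed

lemma Amat_nonzero: "Amat lam \<noteq> 0"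
proof
  assume "Amat lam = 0"
  moreover have "Amat lam $ (0,0) $ (0,0) = 1"
    by (simp add: Amat_entry Aentries_def Let_def)
  ultimately show False
    by simp
qed

lemma ztilde_outer_off_Amat_ray:
  assumes "0 < s" "lam \<noteq> 0"
  shows "s *\<^sub>R Amat lam \<noteq> ztilde_outer z"
proof
  assume eq: "s *\<^sub>R Amat lam = ztilde_outer z"
  have "ztilde_outer z $ (0,0) $ (0,1) * ztilde_outer z $ (0,1) $ (0,0)
      = ztilde_outer z $ (0,0) $ (0,0) * ztilde_outer z $ (0,1) $ (0,1)"
    unfolding ztilde_outer_eq_outer by (rule outer_entry_mult)
  with assms show False
    by (simp add: eq[symmetric] matrix_scaleR_entry Amat_entry Aentries_def Let_def)
qed

theorem mainTheorem2:
  fixes lam :: real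
  assumes "lam > 0" and "lam \<noteq> 1"
  shows "Amat lam \<in> coneT - coneV1
    \<and> (\<forall>B C. B \<in> coneT \<and> C \<in> coneT \<and> Amat lam = B + C \<longrightarrow>
         (\<exists>b::real. b \<ge> 0 \<and> B = b *\<^sub>R Amat lam) \<and> (\<exists>c::real. c \<ge> 0 \<and> C = c *\<^sub>R Amat lam))"
proof -
  have "lam \<noteq> 0"
    using assms(1) by simp
  have extreme: "\<exists>b\<ge>0. B = b *\<^sub>R Amat lam"
    if "B \<in> coneT" "C \<in> coneT" "B + C = Amat lam" for B C
    using coneT_summand_of_Amat_on_ray[OF assms that] .
  have "Amat lam \<notin> convex_cone hull {ztilde_outer z | z. rank z \<le> 1}"
  proof (rule extreme_ray_notin_convex_cone_hull[OF convex_cone_coneT _ Amat_nonzero extreme])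
    show "{ztilde_outer z | z. rank z \<le> 1} \<subseteq> coneT"
      using ztilde_outer_in_coneT by blast
    show "s *\<^sub>R Amat lam \<notin> {ztilde_outer z | z. rank z \<le> 1}" if "0 < s" for s
      using ztilde_outer_off_Amat_ray[OF that \<open>lam \<noteq> 0\<close>] by blast
  qed
  moreover have "Amat lam \<in> coneT"
    using \<open>lam \<noteq> 0\<close> by (rule Amat_in_coneT)
  moreover have "(\<exists>b\<ge>0. B = b *\<^sub>R Amat lam) \<and> (\<exists>c\<ge>0. C = c *\<^sub>R Amat lam)"
    if "B \<in> coneT" "C \<in> coneT" "Amat lam = B + C" for B C
    using extreme[OF that(1,2)] extreme[OF that(2,1)] that(3) by (simp add: add.commute)
  ultimately show ?thesis
    unfolding coneV1_def by blast
qed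

end
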